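(* Let $V$ be a Whittaker module of type $\eta$ over $R$. Then $\mathrm{End}_R(V)\cong Z(R)/Z_V$ (via the action of the center on $V$). In particular $\mathrm{End}_R(V)$ is commutative.
   Context: Let $f\in\mathbb{C}[H]$ be a polynomial. $R=R(f)$ is the associative $\mathbb{C}$-algebra generated by $E,F,H$ with relations $EF-FE=f(H)$, $HE-EH=E$, $HF-FH=-F$. Let $R(E)=\mathbb{C}[E]$; $Z(R)$ is the center of $R$. Fix an algebra homomorphism $\eta:R(E)\to\mathbb{C}$ with $\eta(E)\neq0$. A vector $v$ of an $R$-module $V$ is a Whittaker vector (of type $\eta$) if $Ev=\eta(E)v$; $V$ is a Whittaker module of type $\eta$ if $V=Rv$ for some Whittaker vector $v$. $Z_V=\mathrm{Ann}_R(V)\cap Z(R)$. *)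

theory Defs
  imports "HOL-Computational_Algebra.Polynomial"
begin

datatype gen = GE | GF | GH

text \<open>The free associative C-algebra on E, F, H: finitely supported functions
  from words (lists of generators) to complex coefficients.\<close>
type_synonym fa = "gen list \<Rightarrow> complex"

definition FA :: "fa set" where
  "FA = {p. finite {w. p w \<noteq> 0}}"

definition fa_add :: "fa \<Rightarrow> fa \<Rightarrow> fa" where
  "fa_add p q = (\<lambda>w. p w + q w)"

definition fa_neg :: "fa \<Rightarrow> fa" where
  "fa_neg p = (\<lambda>w. - p w)"

definition fa_sub :: "fa \<Rightarrow> fa \<Rightarrow> fa" where
  "fa_sub p q = (\<lambda>w. p w - q w)"

definition fa_mult :: "fa \<Rightarrow> fa \<Rightarrow> fa" where
  "fa_mult p q = (\<lambda>w. \<Sum>i\<le>length w. p (take i w) * q (drop i w))"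

definition fa_const :: "complex \<Rightarrow> fa" where
  "fa_const c = (\<lambda>w. if w = [] then c else 0)"

definition fa_word :: "gen list \<Rightarrow> fa" where
  "fa_word u = (\<lambda>w. if w = u then 1 else 0)"

abbreviation "fa_E \<equiv> fa_word [GE]"
abbreviation "fa_F \<equiv> fa_word [GF]"
abbreviation "fa_H \<equiv> fa_word [GH]"

definition fa_polyH :: "complex poly \<Rightarrow> fa" where
  "fa_polyH f = (\<lambda>w. if set w \<subseteq> {GH} then coeff f (length w) else 0)"

definition R_rels :: "complex poly \<Rightarrow> fa set" where
  "R_rels f = {
     fa_sub (fa_sub (fa_mult fa_E fa_F) (fa_mult fa_F fa_E)) (fa_polyH f),
     fa_sub (fa_sub (fa_mult fa_H fa_E) (fa_mult fa_E fa_H)) fa_E,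
     fa_add (fa_sub (fa_mult fa_H fa_F) (fa_mult fa_F fa_H)) fa_F }"

text \<open>The two-sided ideal of the free algebra generated by the relations;
  R(f) is the quotient FA / R_ideal f.\<close>
inductive_set R_ideal :: "complex poly \<Rightarrow> fa set" for f where
  zero: "(\<lambda>_. 0) \<in> R_ideal f"
| add: "x \<in> R_ideal f \<Longrightarrow> y \<in> R_ideal f \<Longrightarrow> fa_add x y \<in> R_ideal f"
| gen: "r \<in> R_rels f \<Longrightarrow> a \<in> FA \<Longrightarrow> b \<in> FA \<Longrightarrow> fa_mult (fa_mult a r) b \<in> R_ideal f"

text \<open>Representatives of central elements of R(f): z with zb - bz in the ideal
  for all b.\<close>
definition R_center :: "complex poly \<Rightarrow> fa set" where
  "R_center f = {z \<in> FA. \<forall>b\<in>FA. fa_sub (fa_mult z b) (fa_mult b z) \<in> R_ideal f}"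

text \<open>An R(f)-module: an abelian group V with an action of the free algebra
  (which makes V a complex vector space via the scalars) annihilated by the ideal
  of relations; this is exactly a module over R(f).\<close>
definition R_module :: "complex poly \<Rightarrow> (fa \<Rightarrow> 'v::ab_group_add \<Rightarrow> 'v) \<Rightarrow> bool" where
  "R_module f act \<longleftrightarrow>
     (\<forall>p\<in>FA. \<forall>x y. act p (x + y) = act p x + act p y) \<and>
     (\<forall>p\<in>FA. \<forall>q\<in>FA. \<forall>x. act (fa_add p q) x = act p x + act q x) \<and>
     (\<forall>p\<in>FA. \<forall>q\<in>FA. \<forall>x. act (fa_mult p q) x = act p (act q x)) \<and>
     (\<forall>x. act (fa_const 1) x = x) \<and>
     (\<forall>r\<in>R_ideal f. \<forall>x. act r x = 0)"

definition whittaker_vector :: "(fa \<Rightarrow> 'v \<Rightarrow> 'v) \<Rightarrow> complex \<Rightarrow> 'v \<Rightarrow> bool" where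
  "whittaker_vector act eta v \<longleftrightarrow> act fa_E v = act (fa_const eta) v"

text \<open>Whittaker module of type eta (eta = eta(E), assumed nonzero): V = R v.\<close>
definition whittaker_module :: "complex poly \<Rightarrow> (fa \<Rightarrow> 'v::ab_group_add \<Rightarrow> 'v) \<Rightarrow> complex \<Rightarrow> bool" where
  "whittaker_module f act eta \<longleftrightarrow> R_module f act \<and>
     (\<exists>v. whittaker_vector act eta v \<and> (\<forall>x. \<exists>p\<in>FA. x = act p v))"

text \<open>End_R(V): additive maps commuting with the action (hence C-linear).\<close>
definition R_End :: "(fa \<Rightarrow> 'v::ab_group_add \<Rightarrow> 'v) \<Rightarrow> ('v \<Rightarrow> 'v) set" where
  "R_End act = {\<phi>. (\<forall>x y. \<phi> (x + y) = \<phi> x + \<phi> y) \<and>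
                   (\<forall>p\<in>FA. \<forall>x. \<phi> (act p x) = act p (\<phi> x))}"

definition Z_ann :: "complex poly \<Rightarrow> (fa \<Rightarrow> 'v::ab_group_add \<Rightarrow> 'v) \<Rightarrow> fa set" where
  "Z_ann f act = {z \<in> R_center f. \<forall>x. act z x = 0}"

end

theory Submission
  imports Defs
begin

text \<open>
  Choose u with u(H) - u(H - 1) = f(H); then the Casimir element \<Omega> = FE + u(H) is central.
  Because E p(H) = p(H - 1) E, F p(H) = p(H + 1) F and \<eta> F v = (\<Omega> - u(H)) v for the
  Whittaker vector v, every vector of V = Rv is G(\<Omega>, H) v for a polynomial G in H with
  coefficients in \<complex>[\<Omega>], and E acts on it as \<eta> G(\<Omega>, H - 1) v.  Hence the G with
  G(\<Omega>, H) v = 0 form an ideal stable under H \<mapsto> H - 1.  Taking differences lowers the degree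
  in H and multiplies the leading coefficient by a positive integer, so such an ideal contains
  G - G(\<Omega>, 0) as soon as it contains G(\<Omega>, H) - G(\<Omega>, H - 1).  Therefore every Whittaker
  vector of V is c(\<Omega>) v with c(\<Omega>) central.  An endomorphism \<phi> is determined by the
  Whittaker vector \<phi>(v), so it is the action of a central element; endomorphisms therefore
  commute, and two central elements act alike iff their difference lies in Z_V.
\<close>

section \<open>Backward differences of polynomials\<close>

abbreviation shift_down :: "'a::comm_ring_1 poly \<Rightarrow> 'a poly" where
  "shift_down p \<equiv> pcompose p [:-1, 1:]"

abbreviation shift_up :: "'a::comm_ring_1 poly \<Rightarrow> 'a poly" where
  "shift_up p \<equiv> pcompose p [:1, 1:]"

lemma shift_down_pCons: "shift_down (pCons a p) = [:a:] + pCons 0 (shift_down p) - shift_down p"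
  by (simp add: pcompose_pCons algebra_simps)

lemma shift_up_pCons: "shift_up (pCons a p) = [:a:] + pCons 0 (shift_up p) + shift_up p"
  by (simp add: pcompose_pCons algebra_simps)

lemma coeff_shift_down_top:
  fixes p :: "'a::idom poly"
  assumes "degree p \<le> n"
  shows "coeff (shift_down p) n = coeff p n"
proof (cases "degree p = n")
  case True
  then show ?thesis using lead_coeff_comp[of "[:-1, 1:]" p] by (simp add: degree_pcompose)
next
  case False
  with assms have "degree (shift_down p) < n" by (simp add: degree_pcompose)
  with False assms show ?thesis by (simp add: coeff_eq_0)
qed

lemma backward_difference_pCons:
  "pCons a p - shift_down (pCons a p) = pCons 0 (p - shift_down p) + shift_down p"
  by (simp add: shift_down_pCons)

lemma backward_difference_top_coeff:
  fixes p :: "'a::idom poly"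
  assumes "degree p \<le> Suc n"
  shows "degree (p - shift_down p) \<le> n
    \<and> coeff (p - shift_down p) n = of_nat (Suc n) * coeff p (Suc n)"
  using assms
proof (induction n arbitrary: p)
  case 0
  obtain a q where p: "p = pCons a q" by (cases p)
  with "0" have "degree q = 0" by (simp split: if_splits)
  then obtain c where "q = [:c:]" by (rule degree_eq_zeroE)
  then show ?case by (simp add: p backward_difference_pCons)
next
  case (Suc m)
  obtain a q where p: "p = pCons a q" by (cases p)
  with Suc.prems have q: "degree q \<le> Suc m" by (simp split: if_splits)
  note IH = Suc.IH[OF q]
  have "degree (pCons 0 (q - shift_down q)) \<le> Suc m"
    using IH by (metis degree_pCons_le le_trans Suc_le_mono)
  moreover have "degree (shift_down q) \<le> Suc m"
    using q by (simp add: degree_pcompose)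
  ultimately have "degree (p - shift_down p) \<le> Suc m"
    unfolding p backward_difference_pCons by (rule degree_add_le)
  moreover
  have "coeff (p - shift_down p) (Suc m) = of_nat (Suc m) * coeff q (Suc m) + coeff q (Suc m)"
    unfolding p backward_difference_pCons using IH coeff_shift_down_top[OF q] by simp
  then have "coeff (p - shift_down p) (Suc m) = of_nat (Suc (Suc m)) * coeff p (Suc (Suc m))"
    by (simp add: p algebra_simps)
  ultimately show ?case ..
qed

lemma backward_difference_degree:
  fixes p :: "'a::{idom,ring_char_0} poly"
  assumes "degree p = Suc n"
  shows "degree (p - shift_down p) = n"
    and "lead_coeff (p - shift_down p) = of_nat (Suc n) * lead_coeff p"
proof -
  have le: "degree (p - shift_down p) \<le> n"
    and c: "coeff (p - shift_down p) n = of_nat (Suc n) * lead_coeff p"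
    using backward_difference_top_coeff[of p n] assms by simp_all
  have "p \<noteq> 0" using assms by auto
  then have "coeff (p - shift_down p) n \<noteq> 0"
    unfolding c by (simp del: of_nat_Suc)
  then have "n \<le> degree (p - shift_down p)" by (rule le_degree)
  with le show "degree (p - shift_down p) = n" by simp
  with c show "lead_coeff (p - shift_down p) = of_nat (Suc n) * lead_coeff p" by simp
qed

lemma backward_difference_surj:
  fixes f :: "'a::field_char_0 poly"
  shows "\<exists>u. u - shift_down u = f"
proof (induction "degree f" arbitrary: f rule: less_induct)
  case less
  show ?case
  proof (cases "f = 0")
    case True
    then show ?thesis by (intro exI[of _ 0]) simp
  next
    case False
    define d where "d = degree f"
    define u where "u = monom (lead_coeff f / of_nat (Suc d)) (Suc d)"
    have du: "degree u \<le> Suc d" by (simp add: u_def degree_monom_le)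
    have "coeff (u - shift_down u) d = of_nat (Suc d) * coeff u (Suc d)"
      by (rule backward_difference_top_coeff[OF du, THEN conjunct2])
    also have "\<dots> = lead_coeff f" by (simp add: u_def del: of_nat_Suc)
    finally have top: "coeff (u - shift_down u) d = lead_coeff f" .
    define g where "g = f - (u - shift_down u)"
    have "degree g \<le> d"
      using backward_difference_top_coeff[OF du, THEN conjunct1]
      by (simp add: g_def d_def degree_diff_le)
    moreover have "coeff g d = 0" using top by (simp add: g_def d_def)
    ultimately have "g = 0 \<or> degree g < degree f"
      by (cases "g = 0") (auto simp: d_def order_le_less simp flip: leading_coeff_0_iff)
    then obtain w where w: "w - shift_down w = g"
      using less.hyps by (metis cancel_comm_monoid_add_class.diff_cancel pcompose_0)
    have "(w + u) - shift_down (w + u) = (w - shift_down w) + (u - shift_down u)"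
      by (simp add: pcompose_add)
    then have "(w + u) - shift_down (w + u) = f"
      by (simp add: w g_def)
    then show ?thesis by blast
  qed
qed

locale shift_stable_subspace =
  fixes K :: "'a::field_char_0 poly poly set"
  assumes zero_mem: "0 \<in> K"
    and diff_mem: "G \<in> K \<Longrightarrow> G' \<in> K \<Longrightarrow> G - G' \<in> K"
    and smult_mem: "G \<in> K \<Longrightarrow> smult [:c:] G \<in> K"
    and pCons_zero_mem: "G \<in> K \<Longrightarrow> pCons 0 G \<in> K"
    and shift_down_mem: "G \<in> K \<Longrightarrow> shift_down G \<in> K"
begin

lemma add_mem: "G \<in> K \<Longrightarrow> G' \<in> K \<Longrightarrow> G + G' \<in> K"
  using diff_mem[OF _ diff_mem[OF zero_mem]] by fastforce

lemma const_mem_of_nat_cancel: "[:of_nat (Suc n) * p:] \<in> K \<Longrightarrow> [:p:] \<in> K"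
  using smult_mem[of "[:of_nat (Suc n) * p:]" "1 / of_nat (Suc n)"]
  by (simp add: of_nat_poly del: of_nat_Suc)

lemma monom_mem: "[:a:] \<in> K \<Longrightarrow> monom a n \<in> K"
  by (induction n) (simp_all add: monom_0 monom_Suc pCons_zero_mem)

lemma lead_coeff_mem: "G \<in> K \<Longrightarrow> [:lead_coeff G:] \<in> K"
proof (induction "degree G" arbitrary: G)
  case 0
  then show ?case by (metis degree_0_id)
next
  case (Suc n)
  then have "G - shift_down G \<in> K" by (simp add: diff_mem shift_down_mem)
  moreover note backward_difference_degree[OF Suc.hyps(2)[symmetric]]
  ultimately have "[:of_nat (Suc n) * lead_coeff G:] \<in> K" using Suc.hyps(1) by metis
  then show ?case by (rule const_mem_of_nat_cancel)
qed

lemma constant_term_mem: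
  "G - shift_down G \<in> K \<Longrightarrow> G - [:coeff G 0:] \<in> K"
proof (induction "degree G" arbitrary: G rule: less_induct)
  case less
  show ?case
  proof (cases "degree G")
    case 0
    then show ?thesis by (metis degree_0_id diff_self zero_mem)
  next
    case (Suc n)
    define M where "M = monom (lead_coeff G) (Suc n)"
    have "[:of_nat (Suc n) * lead_coeff G:] \<in> K"
      using lead_coeff_mem[OF less.prems] backward_difference_degree(2)[OF Suc] by simp
    then have M: "M \<in> K" "shift_down M \<in> K"
      unfolding M_def by (simp_all add: const_mem_of_nat_cancel monom_mem shift_down_mem)
    have "degree (G - M) < degree G"
    proof (rule degree_lessI)
      show "G - M \<noteq> 0 \<or> 0 < degree G" using Suc by simp
      show "\<forall>k\<ge>degree G. coeff (G - M) k = 0"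
        using Suc by (auto simp: M_def coeff_eq_0)
    qed
    moreover have "(G - shift_down G) - (M - shift_down M) \<in> K"
      using less.prems M by (simp add: diff_mem)
    then have "(G - M) - shift_down (G - M) \<in> K"
      by (simp add: pcompose_diff algebra_simps)
    ultimately have "(G - M) - [:coeff (G - M) 0:] \<in> K" by (rule less.hyps)
    moreover have "coeff M 0 = 0" by (simp add: M_def)
    ultimately have "(G - [:coeff G 0:]) - M \<in> K" by (simp add: algebra_simps)
    from add_mem[OF this M(1)] show ?thesis by simp
  qed
qed

end

section \<open>The free algebra on E, F, H\<close>

lemma fa_mult_assoc: "fa_mult (fa_mult p q) r = fa_mult p (fa_mult q r)"
proof
  fix w :: "gen list"
  define n where "n = length w"
  define g where "g j k = p (take j w) * q (take k (drop j w)) * r (drop (j + k) w)" for j k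
  have "fa_mult (fa_mult p q) r w = (\<Sum>i\<le>n. \<Sum>j\<le>i. g j (i - j))"
    unfolding fa_mult_def n_def g_def
    by (auto simp: sum_distrib_right min_def take_drop intro!: sum.cong)
  also have "\<dots> = (\<Sum>(j, k)\<in>{(j, k). j + k \<le> n}. g j k)"
    by (rule sum.triangle_reindex_eq[symmetric])
  also have "{(j, k). j + k \<le> n} = Sigma {..n} (\<lambda>j. {..n - j})" by auto
  also have "(\<Sum>(j, k)\<in>Sigma {..n} (\<lambda>j. {..n - j}). g j k) = (\<Sum>j\<le>n. \<Sum>k\<le>n - j. g j k)"
    by (rule sum.Sigma[symmetric]) auto
  also have "\<dots> = fa_mult p (fa_mult q r) w"
    unfolding fa_mult_def n_def g_def
    by (auto simp: sum_distrib_left mult.assoc add.commute intro!: sum.cong)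
  finally show "fa_mult (fa_mult p q) r w = fa_mult p (fa_mult q r) w" .
qed

lemma fa_mult_const_left: "fa_mult (fa_const c) q = (\<lambda>w. c * q w)"
proof
  fix w :: "gen list"
  have "fa_mult (fa_const c) q w = (\<Sum>i\<le>length w. if i = 0 then c * q w else 0)"
    unfolding fa_mult_def fa_const_def by (rule sum.cong) auto
  then show "fa_mult (fa_const c) q w = c * q w" by simp
qed

lemma fa_mult_const_right: "fa_mult p (fa_const c) = (\<lambda>w. c * p w)"
proof
  fix w :: "gen list"
  have "fa_mult p (fa_const c) w = (\<Sum>i\<le>length w. if i = length w then c * p w else 0)"
    unfolding fa_mult_def fa_const_def by (rule sum.cong) auto
  then show "fa_mult p (fa_const c) w = c * p w" by simp
qed

lemma fa_mult_word_left:
  "fa_mult (fa_word u) p w = (if take (length u) w = u then p (drop (length u) w) else 0)"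
proof -
  have "fa_mult (fa_word u) p w
      = (\<Sum>i\<le>length w. if i = length u \<and> take (length u) w = u then p (drop (length u) w) else 0)"
    unfolding fa_mult_def fa_word_def by (rule sum.cong) auto
  moreover have "take (length u) w = u \<Longrightarrow> length u \<le> length w"
    by (drule arg_cong[of _ _ length]) simp
  ultimately show ?thesis by simp
qed

lemma FA_zero: "(\<lambda>_. 0) \<in> FA"
  by (simp add: FA_def)

lemma FA_add: "p \<in> FA \<Longrightarrow> q \<in> FA \<Longrightarrow> fa_add p q \<in> FA"
  unfolding FA_def fa_add_def
  by (auto intro: finite_subset[of _ "{w. p w \<noteq> 0} \<union> {w. q w \<noteq> 0}"])

lemma FA_neg: "p \<in> FA \<Longrightarrow> fa_neg p \<in> FA"
  by (simp add: FA_def fa_neg_def)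

lemma FA_sub: "p \<in> FA \<Longrightarrow> q \<in> FA \<Longrightarrow> fa_sub p q \<in> FA"
  unfolding FA_def fa_sub_def
  by (auto intro: finite_subset[of _ "{w. p w \<noteq> 0} \<union> {w. q w \<noteq> 0}"])

lemma FA_const: "fa_const c \<in> FA"
  by (simp add: FA_def fa_const_def)

lemma FA_word: "fa_word u \<in> FA"
  by (simp add: FA_def fa_word_def)

lemma FA_mult:
  assumes "p \<in> FA" "q \<in> FA"
  shows "fa_mult p q \<in> FA"
proof -
  have "{w. fa_mult p q w \<noteq> 0} \<subseteq> (\<lambda>(u, v). u @ v) ` ({w. p w \<noteq> 0} \<times> {w. q w \<noteq> 0})"
  proof
    fix w assume "w \<in> {w. fa_mult p q w \<noteq> 0}"
    then obtain i where "p (take i w) * q (drop i w) \<noteq> 0"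
      unfolding fa_mult_def by (auto elim: sum.not_neutral_contains_not_neutral)
    then show "w \<in> (\<lambda>(u, v). u @ v) ` ({w. p w \<noteq> 0} \<times> {w. q w \<noteq> 0})"
      by (auto intro!: image_eqI[where x = "(take i w, drop i w)"])
  qed
  with assms show ?thesis
    unfolding FA_def by (auto intro: finite_subset)
qed

typedef freealg = FA
  morphisms Rep_freealg Abs_freealg
  using FA_zero by blast

setup_lifting type_definition_freealg

instantiation freealg :: ring_1
begin

lift_definition zero_freealg :: freealg is "\<lambda>_. 0" by (rule FA_zero)
lift_definition one_freealg :: freealg is "fa_const 1" by (rule FA_const)
lift_definition plus_freealg :: "freealg \<Rightarrow> freealg \<Rightarrow> freealg" is fa_add by (rule FA_add)
lift_definition minus_freealg :: "freealg \<Rightarrow> freealg \<Rightarrow> freealg" is fa_sub by (rule FA_sub)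
lift_definition uminus_freealg :: "freealg \<Rightarrow> freealg" is fa_neg by (rule FA_neg)
lift_definition times_freealg :: "freealg \<Rightarrow> freealg \<Rightarrow> freealg" is fa_mult by (rule FA_mult)

instance
proof
  fix a b c :: freealg
  show "a * b * c = a * (b * c)" by transfer (rule fa_mult_assoc)
  show "a + b + c = a + (b + c)" by transfer (auto simp: fa_add_def)
  show "a + b = b + a" by transfer (auto simp: fa_add_def)
  show "0 + a = a" by transfer (auto simp: fa_add_def)
  show "- a + a = 0" by transfer (auto simp: fa_add_def fa_neg_def)
  show "a - b = a + - b" by transfer (auto simp: fa_add_def fa_neg_def fa_sub_def)
  show "(a + b) * c = a * c + b * c"
    by transfer (auto simp: fa_add_def fa_mult_def sum.distrib algebra_simps)
  show "a * (b + c) = a * b + a * c"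
    by transfer (auto simp: fa_add_def fa_mult_def sum.distrib algebra_simps)
  show "1 * a = a" by transfer (simp add: fa_mult_const_left)
  show "a * 1 = a" by transfer (simp add: fa_mult_const_right)
  show "(0::freealg) \<noteq> 1" by transfer (auto simp: fa_const_def fun_eq_iff)
qed

end

lift_definition scalar :: "complex \<Rightarrow> freealg" is fa_const by (rule FA_const)
lift_definition word :: "gen list \<Rightarrow> freealg" is fa_word by (rule FA_word)

abbreviation "gE \<equiv> word [GE]"
abbreviation "gF \<equiv> word [GF]"
abbreviation "gH \<equiv> word [GH]"

lemma Rep_freealg_scalar_mult: "Rep_freealg (scalar c * x) w = c * Rep_freealg x w"
  by transfer (simp add: fa_mult_const_left)

lemma scalar_commute: "scalar c * x = x * scalar c"
  by transfer (simp add: fa_mult_const_left fa_mult_const_right)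

lemma scalar_add: "scalar (a + b) = scalar a + scalar b"
  by transfer (auto simp: fa_const_def fa_add_def)

lemma scalar_mult: "scalar (a * b) = scalar a * scalar b"
  by transfer (simp only: fa_mult_const_left, auto simp: fa_const_def)

lemma scalar_0 [simp]: "scalar 0 = 0"
  by transfer (simp add: fa_const_def)

lemma scalar_uminus: "scalar (- a) = - scalar a"
  by transfer (auto simp: fa_const_def fa_neg_def)

lemma scalar_1 [simp]: "scalar 1 = 1"
  by transfer simp

lemma word_append: "word (u @ v) = word u * word v"
  by transfer (rule ext, simp only: fa_mult_word_left, auto simp: fa_word_def append_eq_conv_conj,
      metis append_take_drop_id)

lemma word_Nil: "word [] = 1"
  by transfer (simp add: fa_word_def fa_const_def)

lemma Rep_freealg_sum: "Rep_freealg (sum g S) w = (\<Sum>i\<in>S. Rep_freealg (g i) w)"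
  by (induction S rule: infinite_finite_induct)
    (auto simp: zero_freealg.rep_eq plus_freealg.rep_eq fa_add_def)

lemma freealg_expansion:
  "x = (\<Sum>w\<in>{w. Rep_freealg x w \<noteq> 0}. scalar (Rep_freealg x w) * word w)"
proof (rule Rep_freealg_inject[THEN iffD1], rule ext)
  fix u
  have fin: "finite {w. Rep_freealg x w \<noteq> 0}"
    using Rep_freealg[of x] by (simp add: FA_def)
  have "Rep_freealg (\<Sum>w\<in>{w. Rep_freealg x w \<noteq> 0}. scalar (Rep_freealg x w) * word w) u
      = (\<Sum>w\<in>{w. Rep_freealg x w \<noteq> 0}. if u = w then Rep_freealg x w else 0)"
    by (simp add: Rep_freealg_sum Rep_freealg_scalar_mult word.rep_eq fa_word_def if_distrib
        cong: if_cong)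
  also have "\<dots> = Rep_freealg x u" using fin by simp
  finally show "Rep_freealg x u
      = Rep_freealg (\<Sum>w\<in>{w. Rep_freealg x w \<noteq> 0}. scalar (Rep_freealg x w) * word w) u" ..
qed

lemma freealg_induct [case_names one gen scalar add]:
  assumes one: "P 1"
    and gen: "\<And>g x. P x \<Longrightarrow> P (word [g] * x)"
    and scalar: "\<And>c x. P x \<Longrightarrow> P (scalar c * x)"
    and add: "\<And>x y. P x \<Longrightarrow> P y \<Longrightarrow> P (x + y)"
  shows "P x"
proof -
  have words: "P (word w)" for w
  proof (induction w)
    case Nil
    then show ?case by (simp add: word_Nil one)
  next
    case (Cons g w)
    then show ?case using gen word_append[of "[g]" w] by simp
  qed
  have zero: "P 0" using scalar[OF one, of 0] by simp
  have "P (\<Sum>w\<in>S. scalar (Rep_freealg x w) * word w)" for S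
    by (induction S rule: infinite_finite_induct) (simp_all add: zero add scalar words)
  then show ?thesis by (subst freealg_expansion)
qed

definition poly_eval :: "complex poly \<Rightarrow> freealg \<Rightarrow> freealg" where
  "poly_eval p x = fold_coeffs (\<lambda>a r. scalar a + x * r) p 0"

lemma poly_eval_0 [simp]: "poly_eval 0 x = 0"
  by (simp add: poly_eval_def)

lemma poly_eval_pCons: "poly_eval (pCons a p) x = scalar a + x * poly_eval p x"
  by (cases "p = 0 \<and> a = 0") (auto simp: poly_eval_def)

lemma poly_eval_const [simp]: "poly_eval [:a:] x = scalar a"
  by (simp add: poly_eval_pCons)

lemma poly_eval_X [simp]: "poly_eval [:0, 1:] x = x"
  by (simp add: poly_eval_pCons)

lemma poly_eval_add: "poly_eval (p + q) x = poly_eval p x + poly_eval q x"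
proof (induction p arbitrary: q)
  case (pCons a p)
  then show ?case by (cases q) (simp add: poly_eval_pCons scalar_add algebra_simps)
qed simp

lemma poly_eval_smult: "poly_eval (smult c p) x = scalar c * poly_eval p x"
proof (induction p)
  case (pCons a p)
  have "x * (scalar c * poly_eval p x) = scalar c * (x * poly_eval p x)"
    by (metis mult.assoc scalar_commute)
  with pCons show ?case by (simp add: poly_eval_pCons scalar_mult distrib_left)
qed simp

lemma poly_eval_mult: "poly_eval (p * q) x = poly_eval p x * poly_eval q x"
  by (induction p)
    (simp_all add: poly_eval_pCons poly_eval_add poly_eval_smult distrib_right mult.assoc)

lemma poly_eval_commute: "x * poly_eval p x = poly_eval p x * x"
proof (induction p)
  case (pCons a p)
  then show ?case
    by (simp add: poly_eval_pCons distrib_left distrib_right scalar_commute) (metis mult.assoc)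
qed simp

lemma poly_eval_pcompose: "poly_eval (pcompose p q) x = poly_eval p (poly_eval q x)"
  by (induction p) (simp_all add: pcompose_pCons poly_eval_pCons poly_eval_add poly_eval_mult)

lemma poly_eval_shift_down: "poly_eval (shift_down p) x = poly_eval p (x - 1)"
  by (simp add: poly_eval_pcompose poly_eval_pCons scalar_uminus)

section \<open>The defining relations and the Casimir element\<close>

lemma R_ideal_mult_left: "x \<in> R_ideal f \<Longrightarrow> a \<in> FA \<Longrightarrow> fa_mult a x \<in> R_ideal f"
proof (induction x rule: R_ideal.induct)
  case zero
  have "fa_mult a (\<lambda>_. 0) = (\<lambda>_. 0)" by (simp add: fa_mult_def)
  then show ?case by (simp add: R_ideal.zero)
next
  case (add x y)
  have "fa_mult a (fa_add x y) = fa_add (fa_mult a x) (fa_mult a y)"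
    by (auto simp: fa_mult_def fa_add_def sum.distrib algebra_simps)
  then show ?case using add by (simp add: R_ideal.add)
next
  case (gen r a' b)
  then show ?case using R_ideal.gen[of r f "fa_mult a a'" b] by (simp add: fa_mult_assoc FA_mult)
qed

lemma R_ideal_mult_right: "x \<in> R_ideal f \<Longrightarrow> a \<in> FA \<Longrightarrow> fa_mult x a \<in> R_ideal f"
proof (induction x rule: R_ideal.induct)
  case zero
  have "fa_mult (\<lambda>_. 0) a = (\<lambda>_. 0)" by (simp add: fa_mult_def)
  then show ?case by (simp add: R_ideal.zero)
next
  case (add x y)
  have "fa_mult (fa_add x y) a = fa_add (fa_mult x a) (fa_mult y a)"
    by (auto simp: fa_mult_def fa_add_def sum.distrib algebra_simps)
  then show ?case using add by (simp add: R_ideal.add)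
next
  case (gen r a' b)
  then show ?case using R_ideal.gen[of r f a' "fa_mult b a"] by (simp add: fa_mult_assoc FA_mult)
qed

lemma R_rels_subset_R_ideal: "R_rels f \<subseteq> R_ideal f"
proof
  fix r assume "r \<in> R_rels f"
  from R_ideal.gen[OF this FA_const FA_const, of 1 1] show "r \<in> R_ideal f"
    by (simp add: fa_mult_const_left fa_mult_const_right)
qed

text \<open>R(f) itself is never formed: we compute in the free algebra modulo the ideal of relations.\<close>

definition cong_R :: "complex poly \<Rightarrow> freealg \<Rightarrow> freealg \<Rightarrow> bool" where
  "cong_R f x y \<longleftrightarrow> Rep_freealg (x - y) \<in> R_ideal f"

lemma cong_R_refl [simp]: "cong_R f x x"
  by (simp add: cong_R_def zero_freealg.rep_eq R_ideal.zero)

lemma cong_R_add: "cong_R f a b \<Longrightarrow> cong_R f c d \<Longrightarrow> cong_R f (a + c) (b + d)"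
  unfolding cong_R_def using R_ideal.add
  by (metis add_diff_add plus_freealg.rep_eq)

lemma cong_R_mult_left: "cong_R f x y \<Longrightarrow> cong_R f (a * x) (a * y)"
  unfolding cong_R_def using R_ideal_mult_left[OF _ Rep_freealg]
  by (metis right_diff_distrib times_freealg.rep_eq)

lemma cong_R_mult_right: "cong_R f x y \<Longrightarrow> cong_R f (x * a) (y * a)"
  unfolding cong_R_def using R_ideal_mult_right[OF _ Rep_freealg]
  by (metis left_diff_distrib times_freealg.rep_eq)

lemma cong_R_sym: "cong_R f x y \<Longrightarrow> cong_R f y x"
  using cong_R_mult_left[of f x y "- 1"] by (simp add: cong_R_def)

lemma cong_R_trans [trans]: "cong_R f x y \<Longrightarrow> cong_R f y z \<Longrightarrow> cong_R f x z"
  using cong_R_add[of f x y y z] cong_R_add[of f "x + y" "y + z" "- y" "- y"]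
  by simp

lemma Rep_poly_eval_gH: "Rep_freealg (poly_eval p gH) = fa_polyH p"
proof (induction p)
  case 0
  show ?case by (auto simp: zero_freealg.rep_eq fa_polyH_def)
next
  case (pCons a p)
  show ?case
  proof
    fix w
    show "Rep_freealg (poly_eval (pCons a p) gH) w = fa_polyH (pCons a p) w"
      using pCons.IH
      by (cases w) (auto simp: poly_eval_pCons plus_freealg.rep_eq times_freealg.rep_eq
          scalar.rep_eq word.rep_eq fa_add_def fa_mult_word_left fa_const_def fa_polyH_def)
  qed
qed

lemma cong_R_of_relation: "Rep_freealg (x - y) \<in> R_rels f \<Longrightarrow> cong_R f x y"
  using R_rels_subset_R_ideal by (auto simp: cong_R_def)

lemma cong_R_EF: "cong_R f (gE * gF) (gF * gE + poly_eval f gH)"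
proof (rule cong_R_of_relation)
  have "Rep_freealg (gE * gF - (gF * gE + poly_eval f gH))
      = fa_sub (fa_sub (fa_mult fa_E fa_F) (fa_mult fa_F fa_E)) (fa_polyH f)"
    by (simp add: minus_freealg.rep_eq plus_freealg.rep_eq times_freealg.rep_eq word.rep_eq
        Rep_poly_eval_gH fa_sub_def fa_add_def diff_diff_eq)
  then show "Rep_freealg (gE * gF - (gF * gE + poly_eval f gH)) \<in> R_rels f"
    by (simp add: R_rels_def)
qed

lemma cong_R_EH: "cong_R f (gE * gH) ((gH - 1) * gE)"
proof (rule cong_R_sym, rule cong_R_of_relation)
  have eq: "(gH - 1) * gE - gE * gH = gH * gE - gE * gH - gE"
    by (simp add: algebra_simps)
  have "Rep_freealg ((gH - 1) * gE - gE * gH)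
      = fa_sub (fa_sub (fa_mult fa_H fa_E) (fa_mult fa_E fa_H)) fa_E"
    unfolding eq by (simp add: minus_freealg.rep_eq times_freealg.rep_eq word.rep_eq)
  then show "Rep_freealg ((gH - 1) * gE - gE * gH) \<in> R_rels f"
    by (simp add: R_rels_def)
qed

lemma cong_R_HF: "cong_R f (gH * gF) (gF * (gH - 1))"
proof (rule cong_R_of_relation)
  have eq: "gH * gF - gF * (gH - 1) = gH * gF - gF * gH + gF"
    by (simp add: algebra_simps)
  have "Rep_freealg (gH * gF - gF * (gH - 1))
      = fa_add (fa_sub (fa_mult fa_H fa_F) (fa_mult fa_F fa_H)) fa_F"
    unfolding eq
    by (simp add: minus_freealg.rep_eq plus_freealg.rep_eq times_freealg.rep_eq word.rep_eq)
  then show "Rep_freealg (gH * gF - gF * (gH - 1)) \<in> R_rels f"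
    by (simp add: R_rels_def)
qed

lemma cong_R_FH: "cong_R f (gF * gH) ((gH + 1) * gF)"
proof -
  have "cong_R f (gF * (gH - 1) + gF) (gH * gF + gF)"
    by (rule cong_R_add[OF cong_R_sym[OF cong_R_HF] cong_R_refl])
  then show ?thesis by (simp add: algebra_simps)
qed

lemma cong_R_E_poly_eval_H: "cong_R f (gE * poly_eval p gH) (poly_eval p (gH - 1) * gE)"
proof (induction p)
  case (pCons a p)
  have "gE * poly_eval (pCons a p) gH = scalar a * gE + (gE * gH) * poly_eval p gH"
    by (simp add: poly_eval_pCons distrib_left scalar_commute mult.assoc)
  also have "cong_R f \<dots> (scalar a * gE + (gH - 1) * (gE * poly_eval p gH))"
    using cong_R_add[OF cong_R_refl cong_R_mult_right[OF cong_R_EH]] by (simp add: mult.assoc)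
  also have "cong_R f \<dots> (scalar a * gE + (gH - 1) * (poly_eval p (gH - 1) * gE))"
    by (rule cong_R_add[OF cong_R_refl cong_R_mult_left[OF pCons.IH]])
  also have "scalar a * gE + (gH - 1) * (poly_eval p (gH - 1) * gE)
      = poly_eval (pCons a p) (gH - 1) * gE"
    by (simp add: poly_eval_pCons distrib_right mult.assoc)
  finally show ?case .
qed simp

lemma cong_R_poly_eval_H_F: "cong_R f (poly_eval p gH * gF) (gF * poly_eval p (gH - 1))"
proof (induction p)
  case (pCons a p)
  have "poly_eval (pCons a p) gH * gF = scalar a * gF + gH * (poly_eval p gH * gF)"
    by (simp add: poly_eval_pCons distrib_right mult.assoc)
  also have "cong_R f \<dots> (scalar a * gF + (gH * gF) * poly_eval p (gH - 1))"
    using cong_R_add[OF cong_R_refl cong_R_mult_left[OF pCons.IH]] by (simp add: mult.assoc)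
  also have "cong_R f \<dots> (scalar a * gF + (gF * (gH - 1)) * poly_eval p (gH - 1))"
    by (rule cong_R_add[OF cong_R_refl cong_R_mult_right[OF cong_R_HF]])
  also have "scalar a * gF + (gF * (gH - 1)) * poly_eval p (gH - 1)
      = gF * poly_eval (pCons a p) (gH - 1)"
    by (simp add: poly_eval_pCons distrib_left mult.assoc scalar_commute)
  finally show ?case .
qed simp

definition antidifference :: "complex poly \<Rightarrow> complex poly" where
  "antidifference f = (SOME u. u - shift_down u = f)"

lemma antidifference: "antidifference f - shift_down (antidifference f) = f"
  unfolding antidifference_def by (rule someI_ex) (rule backward_difference_surj)

lemma poly_eval_antidifference:
  "poly_eval f gH + poly_eval (antidifference f) (gH - 1) = poly_eval (antidifference f) gH"
proof -
  have "f + shift_down (antidifference f) = antidifference f"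
    using antidifference[of f] by (simp add: algebra_simps)
  from arg_cong[OF this, of "\<lambda>p. poly_eval p gH"] show ?thesis
    by (simp add: poly_eval_add poly_eval_shift_down)
qed

definition central :: "complex poly \<Rightarrow> freealg \<Rightarrow> bool" where
  "central f z \<longleftrightarrow> (\<forall>b. cong_R f (z * b) (b * z))"

lemma R_center_iff: "Rep_freealg z \<in> R_center f \<longleftrightarrow> central f z"
proof -
  have "(\<forall>b\<in>FA. fa_sub (fa_mult (Rep_freealg z) b) (fa_mult b (Rep_freealg z)) \<in> R_ideal f)
      \<longleftrightarrow> (\<forall>b. Rep_freealg (z * b - b * z) \<in> R_ideal f)"
    by (metis Rep_freealg Abs_freealg_inverse minus_freealg.rep_eq times_freealg.rep_eq)
  then show ?thesis
    using Rep_freealg[of z] by (simp add: R_center_def central_def cong_R_def)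
qed

lemma R_center_eq_image: "R_center f = Rep_freealg ` {z. central f z}"
proof -
  have "R_center f \<subseteq> range Rep_freealg"
    using type_definition.Rep_range[OF type_definition_freealg] by (auto simp: R_center_def)
  then show ?thesis using R_center_iff by blast
qed

lemma central_if_commutes_with_generators:
  assumes "cong_R f (z * gE) (gE * z)" "cong_R f (z * gF) (gF * z)" "cong_R f (z * gH) (gH * z)"
  shows "central f z"
  unfolding central_def
proof
  fix b
  show "cong_R f (z * b) (b * z)"
  proof (induction b rule: freealg_induct)
    case (gen g x)
    have "z * (word [g] * x) = (z * word [g]) * x" by (simp add: mult.assoc)
    also have "cong_R f \<dots> ((word [g] * z) * x)"
      by (rule cong_R_mult_right) (cases g; use assms in simp)
    also have "(word [g] * z) * x = word [g] * (z * x)" by (simp add: mult.assoc)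
    also have "cong_R f \<dots> (word [g] * (x * z))" by (rule cong_R_mult_left[OF gen])
    finally show ?case by (simp add: mult.assoc)
  next
    case (scalar c x)
    have "cong_R f (scalar c * (z * x)) (scalar c * (x * z))" by (rule cong_R_mult_left[OF scalar])
    then show ?case by (metis mult.assoc scalar_commute)
  next
    case (add x y)
    then show ?case by (simp add: distrib_left distrib_right cong_R_add)
  qed simp
qed

lemma central_scalar: "central f (scalar c)"
  by (simp add: central_def scalar_commute)

lemma central_add: "central f a \<Longrightarrow> central f b \<Longrightarrow> central f (a + b)"
  unfolding central_def by (simp add: distrib_left distrib_right cong_R_add)

lemma central_diff: "central f a \<Longrightarrow> central f b \<Longrightarrow> central f (a - b)"
  unfolding central_def
  by (metis cong_R_add cong_R_mult_left left_diff_distrib mult_minus1 right_diff_distrib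
      diff_conv_add_uminus)

lemma central_mult:
  assumes "central f a" "central f b"
  shows "central f (a * b)"
  unfolding central_def
proof
  fix c
  have "a * b * c = a * (b * c)" by (simp add: mult.assoc)
  also have "cong_R f \<dots> (a * (c * b))" using assms by (simp add: central_def cong_R_mult_left)
  also have "a * (c * b) = (a * c) * b" by (simp add: mult.assoc)
  also have "cong_R f \<dots> ((c * a) * b)" using assms by (simp add: central_def cong_R_mult_right)
  finally show "cong_R f (a * b * c) (c * (a * b))" by (simp add: mult.assoc)
qed

lemma central_poly_eval: "central f z \<Longrightarrow> central f (poly_eval q z)"
  by (induction q) (simp_all add: poly_eval_pCons central_add central_mult central_scalar
      flip: scalar_0)

definition casimir :: "complex poly \<Rightarrow> freealg" where
  "casimir f = gF * gE + poly_eval (antidifference f) gH"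

lemma cong_R_E_casimir: "cong_R f (gE * casimir f) (casimir f * gE)"
proof -
  let ?u = "antidifference f"
  have "gE * casimir f = (gE * gF) * gE + gE * poly_eval ?u gH"
    by (simp add: casimir_def distrib_left mult.assoc)
  also have "cong_R f \<dots> ((gF * gE + poly_eval f gH) * gE + poly_eval ?u (gH - 1) * gE)"
    by (rule cong_R_add[OF cong_R_mult_right[OF cong_R_EF] cong_R_E_poly_eval_H])
  also have "(gF * gE + poly_eval f gH) * gE + poly_eval ?u (gH - 1) * gE = casimir f * gE"
    by (simp add: casimir_def poly_eval_antidifference[symmetric] algebra_simps)
  finally show ?thesis .
qed

lemma cong_R_F_casimir: "cong_R f (casimir f * gF) (gF * casimir f)"
proof -
  let ?u = "antidifference f"
  have "casimir f * gF = gF * (gE * gF) + poly_eval ?u gH * gF"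
    by (simp add: casimir_def distrib_right mult.assoc)
  also have "cong_R f \<dots> (gF * (gF * gE + poly_eval f gH) + gF * poly_eval ?u (gH - 1))"
    by (rule cong_R_add[OF cong_R_mult_left[OF cong_R_EF] cong_R_poly_eval_H_F])
  also have "gF * (gF * gE + poly_eval f gH) + gF * poly_eval ?u (gH - 1) = gF * casimir f"
    by (simp add: casimir_def poly_eval_antidifference[symmetric] algebra_simps)
  finally show ?thesis .
qed

lemma cong_R_H_casimir: "cong_R f (casimir f * gH) (gH * casimir f)"
proof -
  let ?U = "poly_eval (antidifference f) gH"
  have "casimir f * gH = gF * (gE * gH) + ?U * gH"
    by (simp add: casimir_def distrib_right mult.assoc)
  also have "cong_R f \<dots> (gF * ((gH - 1) * gE) + ?U * gH)"
    by (rule cong_R_add[OF cong_R_mult_left[OF cong_R_EH] cong_R_refl])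
  also have "gF * ((gH - 1) * gE) + ?U * gH = (gF * (gH - 1)) * gE + gH * ?U"
    by (simp add: mult.assoc poly_eval_commute)
  also have "cong_R f \<dots> ((gH * gF) * gE + gH * ?U)"
    by (rule cong_R_add[OF cong_R_mult_right[OF cong_R_sym[OF cong_R_HF]] cong_R_refl])
  also have "(gH * gF) * gE + gH * ?U = gH * casimir f"
    by (simp add: casimir_def distrib_left mult.assoc)
  finally show ?thesis .
qed

lemma central_casimir: "central f (casimir f)"
  using cong_R_E_casimir cong_R_F_casimir cong_R_H_casimir
  by (intro central_if_commutes_with_generators) (simp_all add: cong_R_sym)

section \<open>Whittaker modules\<close>

locale R_module_action =
  fixes f :: "complex poly" and act :: "fa \<Rightarrow> 'a::ab_group_add \<Rightarrow> 'a"
  assumes R_module: "R_module f act"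
begin

definition ract :: "freealg \<Rightarrow> 'a \<Rightarrow> 'a" where
  "ract x = act (Rep_freealg x)"

lemma ract_add_vec: "ract p (a + b) = ract p a + ract p b"
  using R_module Rep_freealg by (simp add: R_module_def ract_def)

lemma ract_zero_vec [simp]: "ract p 0 = 0"
  using ract_add_vec[of p 0 0] by simp

lemma ract_diff_vec: "ract p (a - b) = ract p a - ract p b"
  using ract_add_vec[of p "a - b" b] by (simp add: eq_diff_eq)

lemma ract_add: "ract (p + q) a = ract p a + ract q a"
  using R_module Rep_freealg by (simp add: R_module_def ract_def plus_freealg.rep_eq)

lemma ract_diff: "ract (p - q) a = ract p a - ract q a"
  using ract_add[of "p - q" q a] by (simp add: eq_diff_eq)

lemma ract_mult: "ract (p * q) a = ract p (ract q a)"
  using R_module Rep_freealg by (simp add: R_module_def ract_def times_freealg.rep_eq)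

lemma ract_zero [simp]: "ract 0 a = 0"
  using ract_add[of 0 0 a] by simp

lemma ract_one [simp]: "ract 1 a = a"
  using R_module by (simp add: R_module_def ract_def one_freealg.rep_eq)

lemma ract_cong: "cong_R f p q \<Longrightarrow> ract p a = ract q a"
  using R_module ract_diff[of p q a] by (simp add: R_module_def ract_def cong_R_def)

lemma ract_scalar_inverse: "c \<noteq> 0 \<Longrightarrow> ract (scalar (1 / c)) (ract (scalar c) a) = a"
  by (simp flip: ract_mult scalar_mult)

lemma ract_scalar_inj: "c \<noteq> 0 \<Longrightarrow> ract (scalar c) a = ract (scalar c) b \<Longrightarrow> a = b"
  by (metis ract_scalar_inverse)

lemma ract_central_commute: "central f z \<Longrightarrow> ract z (ract b a) = ract b (ract z a)"
  by (metis central_def ract_cong ract_mult)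

lemma ract_in_R_End:
  assumes z: "central f z"
  shows "ract z \<in> R_End act"
proof -
  have "ract z (act p x) = act p (ract z x)" if "p \<in> FA" for p x
    using ract_central_commute[OF z, of "Abs_freealg p" x] that
    by (simp add: ract_def Abs_freealg_inverse)
  then show ?thesis by (simp add: R_End_def ract_add_vec)
qed

lemma ract_eq_iff_Z_ann:
  assumes "central f z" "central f z'"
  shows "ract z = ract z' \<longleftrightarrow> Rep_freealg (z - z') \<in> Z_ann f act"
  using central_diff[OF assms] R_center_iff[of "z - z'" f]
  by (auto simp: Z_ann_def fun_eq_iff ract_diff simp flip: ract_def)

end

locale whittaker_vector_action = R_module_action +
  fixes eta :: complex and v
  assumes eta_nonzero: "eta \<noteq> 0"
    and whittaker: "ract gE v = ract (scalar eta) v"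
begin

abbreviation "\<Omega> \<equiv> casimir f"

text \<open>vec G is G(\<Omega>, H) v, where G has coefficients in \<complex>[\<Omega>] and H is its outer variable.\<close>

definition vec :: "complex poly poly \<Rightarrow> 'a" where
  "vec G = fold_coeffs (\<lambda>q x. ract (poly_eval q \<Omega>) v + ract gH x) G 0"

lemma vec_0 [simp]: "vec 0 = 0"
  by (simp add: vec_def)

lemma vec_pCons: "vec (pCons q G) = ract (poly_eval q \<Omega>) v + ract gH (vec G)"
  by (cases "G = 0 \<and> q = 0") (auto simp: vec_def)

lemma vec_const: "vec [:q:] = ract (poly_eval q \<Omega>) v"
  using vec_pCons[of q 0] by simp

lemma vec_H: "ract gH (vec G) = vec (pCons 0 G)"
  by (simp add: vec_pCons)

lemma vec_add: "vec (G + G') = vec G + vec G'"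
proof (induction G arbitrary: G')
  case (pCons q G)
  then show ?case
    by (cases G') (simp add: vec_pCons poly_eval_add ract_add ract_add_vec algebra_simps)
qed simp

lemma vec_diff: "vec (G - G') = vec G - vec G'"
  using vec_add[of "G - G'" G'] by (simp add: eq_diff_eq)

lemma vec_smult: "vec (smult q G) = ract (poly_eval q \<Omega>) (vec G)"
proof (induction G)
  case (pCons a G)
  have "vec (smult q (pCons a G))
      = ract (poly_eval q \<Omega> * poly_eval a \<Omega>) v + ract gH (ract (poly_eval q \<Omega>) (vec G))"
    by (simp add: vec_pCons poly_eval_mult pCons.IH)
  also have "\<dots> = ract (poly_eval q \<Omega>) (vec (pCons a G))"
    using ract_central_commute[OF central_poly_eval[OF central_casimir], of q gH]
    by (simp add: vec_pCons ract_mult ract_add_vec)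
  finally show ?case .
qed simp

lemma vec_E: "ract gE (vec G) = ract (scalar eta) (vec (shift_down G))"
proof (induction G)
  case (pCons a G)
  have "ract gE (ract (poly_eval a \<Omega>) v) = ract (poly_eval a \<Omega>) (ract (scalar eta) v)"
    using ract_central_commute[OF central_poly_eval[OF central_casimir], of a gE v]
    by (simp add: whittaker)
  also have "\<dots> = ract (scalar eta) (vec [:a:])"
    using ract_central_commute[OF central_scalar, of eta "poly_eval a \<Omega>"]
    by (simp add: vec_const)
  finally have "ract gE (ract (poly_eval a \<Omega>) v) = ract (scalar eta) (vec [:a:])" .
  moreover have "ract gE (ract gH (vec G))
      = ract (scalar eta) (vec (pCons 0 (shift_down G)) - vec (shift_down G))"
  proof -
    have "ract gE (ract gH (vec G)) = ract ((gH - 1) * gE) (vec G)"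
      using ract_cong[OF cong_R_EH] by (simp add: ract_mult)
    also have "\<dots> = ract gH (ract (scalar eta) (vec (shift_down G)))
        - ract (scalar eta) (vec (shift_down G))"
      by (simp add: ract_mult ract_diff pCons.IH)
    finally show ?thesis
      using ract_central_commute[OF central_scalar, of eta gH, symmetric]
      by (simp add: ract_diff_vec vec_H)
  qed
  ultimately show ?case
    by (simp add: vec_pCons ract_add_vec shift_down_pCons vec_add vec_diff flip: add_diff_eq)
qed simp

lemma vec_map_const: "vec (map_poly (\<lambda>c. [:c:]) p) = ract (poly_eval p gH) v"
proof (induction p)
  case (pCons a p)
  then show ?case
    by (simp add: map_poly_pCons vec_pCons poly_eval_pCons ract_add ract_mult)
qed simp

text \<open>F v = vec F_coeffs because \<Omega> v = FE v + u(H) v = \<eta> F v + u(H) v.\<close>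

definition F_coeffs :: "complex poly poly" where
  "F_coeffs = smult [:1 / eta:] ([:[:0, 1:]:] - map_poly (\<lambda>c. [:c:]) (antidifference f))"

lemma F_vec: "ract gF v = vec F_coeffs"
proof -
  let ?U = "map_poly (\<lambda>c. [:c:]) (antidifference f)"
  have "vec [:[:0, 1:]:] = ract (scalar eta) (ract gF v) + vec ?U"
    using ract_central_commute[OF central_scalar, of eta gF]
    by (simp add: vec_const casimir_def ract_add ract_mult whittaker vec_map_const)
  then have "vec F_coeffs = ract (scalar (1 / eta)) (ract (scalar eta) (ract gF v))"
    by (simp add: F_coeffs_def vec_smult vec_diff)
  then show ?thesis
    using ract_scalar_inverse[OF eta_nonzero] by simp
qed

lemma vec_F: "ract gF (vec G) = vec (shift_up G * F_coeffs)"
proof (induction G)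
  case (pCons a G)
  have "ract gF (ract (poly_eval a \<Omega>) v) = ract (poly_eval a \<Omega>) (ract gF v)"
    using ract_central_commute[OF central_poly_eval[OF central_casimir], of a gF] by simp
  then have "ract gF (ract (poly_eval a \<Omega>) v) = vec (smult a F_coeffs)"
    by (simp add: F_vec vec_smult)
  moreover have "ract gF (ract gH (vec G)) = ract ((gH + 1) * gF) (vec G)"
    using ract_cong[OF cong_R_FH] by (simp add: ract_mult)
  then have "ract gF (ract gH (vec G))
      = vec (pCons 0 (shift_up G * F_coeffs)) + vec (shift_up G * F_coeffs)"
    by (simp add: ract_mult ract_add distrib_right pCons.IH vec_H)
  ultimately show ?case
    by (simp add: vec_pCons ract_add_vec shift_up_pCons distrib_right vec_add)
qed simp

lemma span_vec: "\<exists>G. ract x v = vec G"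
proof (induction x rule: freealg_induct)
  case one
  then show ?case by (metis poly_eval_const ract_one scalar_1 vec_const)
next
  case (gen g x)
  then obtain G where "ract x v = vec G" by blast
  then show ?case
    by (cases g)
      (auto simp: ract_mult vec_E vec_F vec_H simp flip: vec_smult[of "[:eta:]", simplified])
next
  case (scalar c x)
  then show ?case by (metis poly_eval_const ract_mult vec_smult)
next
  case (add x y)
  then show ?case by (metis ract_add vec_add)
qed

lemma vec_kernel_shift_stable: "shift_stable_subspace {G. vec G = 0}"
proof
  fix G assume "G \<in> {G. vec G = 0}"
  then have G: "vec G = 0" by simp
  show "pCons 0 G \<in> {G. vec G = 0}" using G by (simp flip: vec_H)
  show "smult [:c:] G \<in> {G. vec G = 0}" for c using G by (simp add: vec_smult)
  have "ract (scalar eta) (vec (shift_down G)) = ract (scalar eta) 0"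
    using G by (simp flip: vec_E)
  then show "shift_down G \<in> {G. vec G = 0}" using ract_scalar_inj[OF eta_nonzero] by simp
qed (simp_all add: vec_diff)

lemma whittaker_vector_central:
  assumes "ract gE (ract p v) = ract (scalar eta) (ract p v)"
  shows "\<exists>z. central f z \<and> ract p v = ract z v"
proof -
  interpret K: shift_stable_subspace "{G. vec G = 0}" by (rule vec_kernel_shift_stable)
  obtain G where G: "ract p v = vec G" using span_vec by blast
  with assms have "ract (scalar eta) (vec (shift_down G)) = ract (scalar eta) (vec G)"
    by (simp add: vec_E)
  then have "vec (G - shift_down G) = 0"
    using ract_scalar_inj[OF eta_nonzero] by (simp add: vec_diff)
  then have "vec (G - [:coeff G 0:]) = 0" using K.constant_term_mem by simp
  then have "ract p v = ract (poly_eval (coeff G 0) \<Omega>) v"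
    by (simp add: G vec_diff vec_const)
  then show ?thesis using central_poly_eval[OF central_casimir] by blast
qed

end

locale whittaker_cyclic_module = whittaker_vector_action +
  assumes generates: "\<forall>x. \<exists>p. x = ract p v"
begin

lemma R_End_eq_ract_central:
  assumes "\<phi> \<in> R_End act"
  shows "\<exists>z. central f z \<and> \<phi> = ract z"
proof -
  have \<phi>: "\<phi> (ract p x) = ract p (\<phi> x)" for p x
    using assms Rep_freealg by (simp add: R_End_def ract_def)
  obtain p where p: "\<phi> v = ract p v" using generates by blast
  have "ract gE (\<phi> v) = ract (scalar eta) (\<phi> v)"
    using whittaker by (simp flip: \<phi>)
  then obtain z where z: "central f z" "\<phi> v = ract z v"
    using whittaker_vector_central p by metis
  have "\<phi> x = ract z x" for x
  proof -
    obtain q where "x = ract q v" using generates by blast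
    then show ?thesis using z by (simp add: \<phi> ract_central_commute)
  qed
  with z show ?thesis by blast
qed

lemma R_End_commute:
  assumes "\<phi> \<in> R_End act" "\<psi> \<in> R_End act"
  shows "\<phi> \<circ> \<psi> = \<psi> \<circ> \<phi>"
  using R_End_eq_ract_central[OF assms(1)] R_End_eq_ract_central[OF assms(2)]
  by (auto simp: fun_eq_iff ract_central_commute)

end

lemma whittaker_module_cyclic:
  assumes "whittaker_module f act eta" "eta \<noteq> 0"
  obtains v where "whittaker_cyclic_module f act eta v"
proof -
  obtain v where R: "R_module f act" and wv: "whittaker_vector act eta v"
    and gen: "\<forall>x. \<exists>p\<in>FA. x = act p v"
    using assms(1) by (auto simp: whittaker_module_def)
  interpret R_module_action f act by (rule R_module_action.intro[OF R])
  have "whittaker_cyclic_module f act eta v"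
  proof unfold_locales
    show "eta \<noteq> 0" by (rule assms(2))
    show "ract gE v = ract (scalar eta) v"
      using wv by (simp add: whittaker_vector_def ract_def scalar.rep_eq word.rep_eq)
    show "\<forall>x. \<exists>p. x = ract p v"
      using gen by (metis ract_def Abs_freealg_inverse)
  qed
  then show ?thesis by (rule that)
qed

theorem mainTheorem5:
  fixes f :: "complex poly" and eta :: complex
    and act :: "fa \<Rightarrow> 'v::ab_group_add \<Rightarrow> 'v"
  assumes "eta \<noteq> 0"
    and "whittaker_module f act eta"
  shows "(\<forall>z\<in>R_center f. act z \<in> R_End act)
       \<and> (\<forall>z\<in>R_center f. \<forall>z'\<in>R_center f.
            act z = act z' \<longleftrightarrow> fa_sub z z' \<in> Z_ann f act)
       \<and> (\<forall>\<phi>\<in>R_End act. \<exists>z\<in>R_center f. \<phi> = act z)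
       \<and> (\<forall>\<phi>\<in>R_End act. \<forall>\<psi>\<in>R_End act. \<phi> \<circ> \<psi> = \<psi> \<circ> \<phi>)"
proof -
  obtain v where "whittaker_cyclic_module f act eta v"
    using whittaker_module_cyclic[OF assms(2,1)] .
  then interpret whittaker_cyclic_module f act eta v .
  have act_Rep: "act (Rep_freealg z) = ract z" for z
    by (simp add: ract_def)
  have "\<forall>\<phi>\<in>R_End act. \<exists>z\<in>R_center f. \<phi> = act z"
    using R_End_eq_ract_central by (auto simp: R_center_eq_image act_Rep)
  moreover have "\<forall>z\<in>R_center f. act z \<in> R_End act"
    using ract_in_R_End by (auto simp: R_center_eq_image act_Rep)
  moreover have "\<forall>z\<in>R_center f. \<forall>z'\<in>R_center f. act z = act z' \<longleftrightarrow> fa_sub z z' \<in> Z_ann f act"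
    using ract_eq_iff_Z_ann by (auto simp: R_center_eq_image act_Rep simp flip: minus_freealg.rep_eq)
  ultimately show ?thesis
    using R_End_commute by blast
qed

end
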